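(* Let $\mathcal{G}$ be a simple temporal clique and let $\mathcal{T}^+=(V,E^+_T)$ be obtained by the backward construction. For every vertex $v$ that is not a collector, there exists a vertex $v'$ in the same out-tree of $\mathcal{T}^+$ as $v$ (collector or not) and a journey of length at most two from $v'$ to $v$ whose first edge is $e^+(v')$.
   Context: A simple temporal clique is a pair $\mathcal{G}=(G,\lambda)$ where $G=(V,E)$ is the complete graph on a finite vertex set $V$ and $\lambda:E\to\mathbb{N}$ assigns to each edge a single integer label such that any two distinct edges sharing an endpoint have different labels; the label of an arc $(x,y)$ is $\lambda(\{x,y\})$. A journey from $x$ to $y$ is a sequence of vertices $x=u_0,\dots,u_k=y$ ($k\ge1$) with $\lambda(\{u_{i-1},u_i\})<\lambda(\{u_i,u_{i+1}\})$ for $1\le i<k$; its length is $k$ and its first edge is $\{u_0,u_1\}$. For a vertex $v$, $e^+(v)$ is the edge incident to $v$ with largest label. Backward construction: let $E^+$ be the set of arcs $(v,u)$ with $\{u,v\}=e^+(v)$, except that if $e^+(u)=e^+(v)=\{u,v\}$ only one of the two arcs $(u,v),(v,u)$ is included (arbitrarily). Initialize $E^+_T:=E^+$. For every vertex $v$ of in-degree at least $2$ in $(V,E^+)$, let $(u_1,v),\dots,(u_\ell,v)$ be its in-arcs in $E^+$, where $(u_\ell,v)$ has the smallest label; for each $i<\ell$, if $u_i$ has in-degree $0$ in $(V,E^+)$, replace $(u_i,v)$ by $(v,u_i)$ in $E^+_T$, and otherwise remove $(u_i,v)$ from $E^+_T$. Set $\mathcal{T}^+=(V,E^+_T)$. Its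 weakly connected components are called out-trees; a collector is a vertex of in-degree $0$ in $\mathcal{T}^+$. *)

theory Defs
  imports Main
begin

definition simple_temporal_clique :: "'a set \<Rightarrow> ('a \<Rightarrow> 'a \<Rightarrow> nat) \<Rightarrow> bool" where
  "simple_temporal_clique V lam \<longleftrightarrow> finite V \<and>
     (\<forall>x\<in>V. \<forall>y\<in>V. x \<noteq> y \<longrightarrow> lam x y = lam y x) \<and>
     (\<forall>x\<in>V. \<forall>y\<in>V. \<forall>z\<in>V. x \<noteq> y \<and> x \<noteq> z \<and> y \<noteq> z \<longrightarrow> lam x y \<noteq> lam x z)"

(* e^+(v) = {v, eplus V lam v}: the other endpoint of the max-label edge at v *)
definition eplus :: "'a set \<Rightarrow> ('a \<Rightarrow> 'a \<Rightarrow> nat) \<Rightarrow> 'a \<Rightarrow> 'a" where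
  "eplus V lam v = (THE u. u \<in> V \<and> u \<noteq> v \<and> (\<forall>w\<in>V. w \<noteq> v \<and> w \<noteq> u \<longrightarrow> lam v w < lam v u))"

(* A is a valid choice of E^+: arcs (v, eplus v), with exactly one of the two arcs
   kept (arbitrarily) when e^+(u) = e^+(v) = {u,v}. *)
definition is_Eplus :: "'a set \<Rightarrow> ('a \<Rightarrow> 'a \<Rightarrow> nat) \<Rightarrow> ('a \<times> 'a) set \<Rightarrow> bool" where
  "is_Eplus V lam A \<longleftrightarrow>
     A \<subseteq> {(v, eplus V lam v) | v. v \<in> V} \<and>
     (\<forall>v\<in>V. (v, eplus V lam v) \<in> A \<or>
              (eplus V lam (eplus V lam v) = v \<and> (eplus V lam v, v) \<in> A)) \<and>
     (\<forall>v\<in>V. eplus V lam (eplus V lam v) = v \<longrightarrow>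
              \<not> ((v, eplus V lam v) \<in> A \<and> (eplus V lam v, v) \<in> A))"

definition indeg :: "('a \<times> 'a) set \<Rightarrow> 'a \<Rightarrow> nat" where
  "indeg A v = card {u. (u, v) \<in> A}"

definition min_in_arc :: "('a \<Rightarrow> 'a \<Rightarrow> nat) \<Rightarrow> ('a \<times> 'a) set \<Rightarrow> 'a \<Rightarrow> 'a \<Rightarrow> bool" where
  "min_in_arc lam A u v \<longleftrightarrow> (u, v) \<in> A \<and> (\<forall>w. (w, v) \<in> A \<longrightarrow> lam u v \<le> lam w v)"

definition ET :: "('a \<Rightarrow> 'a \<Rightarrow> nat) \<Rightarrow> ('a \<times> 'a) set \<Rightarrow> ('a \<times> 'a) set" where
  "ET lam A =
     {(u, v). (u, v) \<in> A \<and> (indeg A v < 2 \<or> min_in_arc lam A u v)} \<union>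
     {(v, u). (u, v) \<in> A \<and> indeg A v \<ge> 2 \<and> \<not> min_in_arc lam A u v \<and> indeg A u = 0}"

definition collector :: "('a \<times> 'a) set \<Rightarrow> 'a \<Rightarrow> bool" where
  "collector T v \<longleftrightarrow> indeg T v = 0"

(* same weakly connected component (out-tree) of (V, T) *)
definition same_out_tree :: "('a \<times> 'a) set \<Rightarrow> 'a \<Rightarrow> 'a \<Rightarrow> bool" where
  "same_out_tree T x y \<longleftrightarrow> (x, y) \<in> (T \<union> T\<inverse>)\<^sup>*"

(* journey given as the vertex list u_0,...,u_k, k = length p - 1 >= 1 *)
definition journey :: "'a set \<Rightarrow> ('a \<Rightarrow> 'a \<Rightarrow> nat) \<Rightarrow> 'a list \<Rightarrow> bool" where
  "journey V lam p \<longleftrightarrow> length p \<ge> 2 \<and> set p \<subseteq> V \<and>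
     (\<forall>i. i + 1 < length p \<longrightarrow> p ! i \<noteq> p ! (i + 1)) \<and>
     (\<forall>i. i + 2 < length p \<longrightarrow> lam (p ! i) (p ! (i + 1)) < lam (p ! (i + 1)) (p ! (i + 2)))"

end

theory Submission
  imports Defs
begin

text \<open>
  An in-arc (u, v) of v in E^+_T is either an arc of E^+ that was kept, so that e^+(u) = {u, v}
  and the single edge u v is the journey, or the reversal of a non-minimal in-arc (v, y) of
  y = e^+(v). In the second case the minimal in-arc (w, y) of y is kept, so w, y, v lie in one
  out-tree, and its label is smaller than that of (v, y); hence w, y, v is a journey starting
  with e^+(w) = {w, y}.
\<close>

lemma journey_edge:
  assumes "u \<in> V" "v \<in> V" "u \<noteq> v"
  shows "journey V lam [u, v]"
  using assms by (auto simp: journey_def less_Suc_eq)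

lemma journey_two_edges:
  assumes "u \<in> V" "v \<in> V" "w \<in> V" "u \<noteq> v" "v \<noteq> w" "lam u v < lam v w"
  shows "journey V lam [u, v, w]"
  using assms by (auto simp: journey_def less_Suc_eq nth_Cons')

lemma eplus_spec:
  assumes clique: "simple_temporal_clique V lam" and "x \<in> V" "z \<in> V" "z \<noteq> x"
  shows "eplus V lam x \<in> V \<and> eplus V lam x \<noteq> x \<and>
    (\<forall>w\<in>V. w \<noteq> x \<and> w \<noteq> eplus V lam x \<longrightarrow> lam x w < lam x (eplus V lam x))"
proof -
  let ?P = "\<lambda>u. u \<in> V \<and> u \<noteq> x \<and> (\<forall>w\<in>V. w \<noteq> x \<and> w \<noteq> u \<longrightarrow> lam x w < lam x u)"
  have fin: "finite (lam x ` (V - {x}))" using clique by (simp add: simple_temporal_clique_def)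
  have "Max (lam x ` (V - {x})) \<in> lam x ` (V - {x})"
    using Max_in[OF fin] assms by blast
  then obtain u where "Max (lam x ` (V - {x})) = lam x u" and "u \<in> V - {x}" by (rule imageE)
  with fin have max: "lam x w \<le> lam x u" if "w \<in> V" "w \<noteq> x" for w
    using that by (metis Max_ge DiffI image_eqI singletonD)
  from \<open>u \<in> V - {x}\<close> have u: "u \<in> V" "u \<noteq> x" by auto
  have distinct: "lam x w \<noteq> lam x u" if "w \<in> V" "w \<noteq> x" "w \<noteq> u" for w
    using clique that u \<open>x \<in> V\<close> unfolding simple_temporal_clique_def by metis
  have "?P u" using u max distinct by (simp add: order.strict_iff_order)
  moreover have "u' = u" if "?P u'" for u'
    using that \<open>?P u\<close> less_asym by blast
  ultimately have "?P (THE u. ?P u)" by (rule theI)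
  then show ?thesis unfolding eplus_def .
qed

lemma is_Eplus_arcD:
  assumes "is_Eplus V lam A" "(a, b) \<in> A"
  shows "a \<in> V \<and> b = eplus V lam a \<and> b \<noteq> a"
proof -
  have "a \<in> V" "b = eplus V lam a"
    using assms unfolding is_Eplus_def by blast+
  moreover have "eplus V lam a \<noteq> a"
    \<comment> \<open>a loop (a, a) would be both arcs of a mutual pair {a, e^+(a)}\<close>
    using assms \<open>a \<in> V\<close> unfolding is_Eplus_def by metis
  ultimately show ?thesis by simp
qed

lemma ex_min_in_arc:
  assumes "(u, v) \<in> A"
  shows "\<exists>w. min_in_arc lam A w v"
  using ex_has_least_nat[of "\<lambda>w. (w, v) \<in> A" u "\<lambda>w. lam w v"] assms
  unfolding min_in_arc_def by blast

lemma min_in_arc_in_ET: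
  assumes "min_in_arc lam A u v"
  shows "(u, v) \<in> ET lam A"
  using assms unfolding ET_def min_in_arc_def by auto

lemma ET_in_arc_cases:
  assumes "(u, v) \<in> ET lam A"
  shows "(u, v) \<in> A \<or> ((v, u) \<in> A \<and> \<not> min_in_arc lam A v u)"
  using assms unfolding ET_def by auto

lemma journey_through_reversed_arc:
  assumes clique: "simple_temporal_clique V lam" and Eplus: "is_Eplus V lam A"
    and "(v, y) \<in> A" "\<not> min_in_arc lam A v y" "min_in_arc lam A w y"
  shows "journey V lam [w, y, v] \<and> y = eplus V lam w"
proof -
  have wy: "(w, y) \<in> A" and "lam w y < lam v y"
    using assms(4,5) \<open>(v, y) \<in> A\<close> unfolding min_in_arc_def by (auto simp: not_le)
  then have "w \<noteq> v" by blast
  obtain v_V: "v \<in> V" and "y \<noteq> v"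
    using is_Eplus_arcD[OF Eplus \<open>(v, y) \<in> A\<close>] by blast
  obtain w_V: "w \<in> V" and y_eq: "y = eplus V lam w" and "y \<noteq> w"
    using is_Eplus_arcD[OF Eplus wy] by blast
  have y_V: "y \<in> V"
    using eplus_spec[OF clique w_V v_V \<open>w \<noteq> v\<close>[symmetric]] y_eq by blast
  have "lam v y = lam y v"
    using clique v_V y_V \<open>y \<noteq> v\<close> unfolding simple_temporal_clique_def by metis
  with \<open>lam w y < lam v y\<close> have "lam w y < lam y v" by simp
  then have "journey V lam [w, y, v]"
    using journey_two_edges w_V y_V v_V \<open>y \<noteq> w\<close> \<open>y \<noteq> v\<close> by metis
  with y_eq show ?thesis by simp
qed

theorem lemma6:
  fixes V :: "'a set" and lam :: "'a \<Rightarrow> 'a \<Rightarrow> nat" and A :: "('a \<times> 'a) set"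
  assumes "simple_temporal_clique V lam"
    and "is_Eplus V lam A"
    and "v \<in> V"
    and "\<not> collector (ET lam A) v"
  shows "\<exists>v' p. v' \<in> V \<and> same_out_tree (ET lam A) v' v \<and>
           journey V lam p \<and> hd p = v' \<and> last p = v \<and> length p - 1 \<le> 2 \<and>
           p ! 1 = eplus V lam v'"
proof -
  obtain u where u: "(u, v) \<in> ET lam A"
    using assms(4) unfolding collector_def indeg_def by fastforce
  from ET_in_arc_cases[OF u] show ?thesis
  proof
    assume "(u, v) \<in> A"
    then obtain u_V: "u \<in> V" and "v = eplus V lam u" and "v \<noteq> u"
      using is_Eplus_arcD[OF assms(2)] by blast
    moreover have "journey V lam [u, v]"
      using journey_edge u_V assms(3) \<open>v \<noteq> u\<close> by metis
    moreover have "same_out_tree (ET lam A) u v"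
      using u unfolding same_out_tree_def by blast
    ultimately show ?thesis by fastforce
  next
    assume reversed: "(v, u) \<in> A \<and> \<not> min_in_arc lam A v u"
    then obtain w where w: "min_in_arc lam A w u"
      using ex_min_in_arc by metis
    then obtain w_V: "w \<in> V"
      using is_Eplus_arcD[OF assms(2)] unfolding min_in_arc_def by blast
    moreover have "journey V lam [w, u, v] \<and> u = eplus V lam w"
      using journey_through_reversed_arc[OF assms(1,2)] reversed w by blast
    moreover have "same_out_tree (ET lam A) w v"
      using min_in_arc_in_ET[OF w] u unfolding same_out_tree_def
      by (meson UnI1 converse_rtrancl_into_rtrancl r_into_rtrancl)
    ultimately show ?thesis by fastforce
  qed
qed

end
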